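(* Let $A,B\in\mathrm{SL}_2\mathbb{R}$ be noncommuting, coherently oriented, both hyperbolic, and assume their translation axes intersect. If $[a]\le[b]$, then $b$ is an optimal word, and so is $a$ provided $[a]=[b]$. There are no other optimal words.
   Context: Setting: $A,B$ have trace $\ge2$; hyperbolic means trace $>2$, with attracting/repelling fixed points $\alpha^\pm$ (for $A$), $\beta^\pm$ (for $B$) in $\partial\mathcal{H}=\mathbb{P}^1\mathbb{R}$; the translation axis is the hyperbolic geodesic joining the two fixed points. Coherent orientation: with $\partial\mathcal{H}$ cyclically ordered and $[\alpha,\beta]$ the closed counterclockwise interval from $\alpha$ to $\beta$, let $I^+=\{\alpha^+\}$ if $\alpha^+=\beta^+$, and otherwise the one of $[\alpha^+,\beta^+],[\beta^+,\alpha^+]$ mapped into itself by both $A$ and $B$ (if it exists); define $I^-$ likewise with $A^{-1},B^{-1},\alpha^-,\beta^-$; the pair is coherently oriented if both exist. Words: $F_2^+$ is the free semigroup of nonempty words over $\{a,b\}$, $|w|$ the length, $\phi$ the homomorphism with $\phi(a)=A,\phi(b)=B$, and $[w]=\mathrm{tr}(\phi(w))$. Define $w\preceq u$ iff $[w^{|u|}]\le[u^{|w|}]$; $w$ is maximal if $u\preceq w$ for all $u\in F_2^+$. A Lyndon word is one strictly smaller in the lexicographic order (with $a<b$) than each of its proper rotations. A complete set of optimal words is a subset $\{v_1,v_2,\dots\}\subseteq F_2^+$ of pairwise distinct maximal Lyndon words such that every maximal word is a power of a rotation of some $v_i$; such a set is unique if it exists, and a word is optimal if it belongs to it. *)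

theory Defs
  imports "HOL-Analysis.Analysis"
begin

type_synonym mat2 = "real^2^2"

datatype letter = La | Lb

definition letter_less :: "(letter \<times> letter) set" where
  "letter_less = {(La, Lb)}"

definition SL2 :: "mat2 \<Rightarrow> bool" where
  "SL2 M \<longleftrightarrow> det M = 1"

definition phi :: "mat2 \<Rightarrow> mat2 \<Rightarrow> letter list \<Rightarrow> mat2" where
  "phi A B w = foldr (\<lambda>l M. (case l of La \<Rightarrow> A | Lb \<Rightarrow> B) ** M) w (mat 1)"

text \<open>[w] = tr(phi w).\<close>
definition wtr :: "mat2 \<Rightarrow> mat2 \<Rightarrow> letter list \<Rightarrow> real" where
  "wtr A B w = trace (phi A B w)"

definition wpow :: "letter list \<Rightarrow> nat \<Rightarrow> letter list" where
  "wpow w n = concat (replicate n w)"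

definition wle :: "mat2 \<Rightarrow> mat2 \<Rightarrow> letter list \<Rightarrow> letter list \<Rightarrow> bool" where
  "wle A B w u \<longleftrightarrow> wtr A B (wpow w (length u)) \<le> wtr A B (wpow u (length w))"

definition maximal_word :: "mat2 \<Rightarrow> mat2 \<Rightarrow> letter list \<Rightarrow> bool" where
  "maximal_word A B w \<longleftrightarrow> w \<noteq> [] \<and> (\<forall>u. u \<noteq> [] \<longrightarrow> wle A B u w)"

definition lyndon :: "letter list \<Rightarrow> bool" where
  "lyndon w \<longleftrightarrow> w \<noteq> [] \<and>
     (\<forall>k. 0 < k \<and> k < length w \<longrightarrow> (w, rotate k w) \<in> lexord letter_less)"

definition complete_optimal :: "mat2 \<Rightarrow> mat2 \<Rightarrow> letter list set \<Rightarrow> bool" where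
  "complete_optimal A B S \<longleftrightarrow>
     (\<forall>v\<in>S. maximal_word A B v \<and> lyndon v) \<and>
     (\<forall>w. maximal_word A B w \<longrightarrow>
        (\<exists>v\<in>S. \<exists>k n. n \<ge> 1 \<and> w = wpow (rotate k v) n))"

text \<open>Boundary of the hyperbolic plane, P^1(R), parametrised by angles theta in [0,pi):
  theta stands for the line spanned by (cos theta, sin theta), i.e. the boundary point
  cot theta of the upper half plane (theta = 0 is infinity).\<close>
definition P1 :: "real set" where
  "P1 = {0..<pi}"

definition dir :: "real \<Rightarrow> real^2" where
  "dir \<theta> = (\<chi> i. if i = 1 then cos \<theta> else sin \<theta>)"

definition hyperbolic :: "mat2 \<Rightarrow> bool" where
  "hyperbolic M \<longleftrightarrow> trace M > 2"

definition attr_fp :: "mat2 \<Rightarrow> real" where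
  "attr_fp M = (THE \<theta>. \<theta> \<in> P1 \<and> (\<exists>l. \<bar>l\<bar> > 1 \<and> M *v dir \<theta> = l *\<^sub>R dir \<theta>))"

definition rep_fp :: "mat2 \<Rightarrow> real" where
  "rep_fp M = (THE \<theta>. \<theta> \<in> P1 \<and> (\<exists>l. \<bar>l\<bar> < 1 \<and> M *v dir \<theta> = l *\<^sub>R dir \<theta>))"

text \<open>Closed counterclockwise interval from p to q in P^1(R) = boundary of the upper half
  plane. Moving counterclockwise (increasing real part on the real axis) corresponds to
  decreasing theta.\<close>
definition ccw_interval :: "real \<Rightarrow> real \<Rightarrow> real set" where
  "ccw_interval p q = {\<theta>\<in>P1. frac ((p - \<theta>) / pi) \<le> frac ((p - q) / pi)}"

definition maps_into_itself :: "mat2 \<Rightarrow> real set \<Rightarrow> bool" where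
  "maps_into_itself M I \<longleftrightarrow>
     (\<forall>\<theta>\<in>I. \<exists>\<theta>'\<in>I. \<exists>c. c \<noteq> 0 \<and> M *v dir \<theta> = c *\<^sub>R dir \<theta>')"

definition coherently_oriented :: "mat2 \<Rightarrow> mat2 \<Rightarrow> bool" where
  "coherently_oriented A B \<longleftrightarrow>
     (attr_fp A = attr_fp B \<or>
       (\<exists>I\<in>{ccw_interval (attr_fp A) (attr_fp B), ccw_interval (attr_fp B) (attr_fp A)}.
          maps_into_itself A I \<and> maps_into_itself B I)) \<and>
     (rep_fp A = rep_fp B \<or>
       (\<exists>I\<in>{ccw_interval (rep_fp A) (rep_fp B), ccw_interval (rep_fp B) (rep_fp A)}.
          maps_into_itself (matrix_inv A) I \<and> maps_into_itself (matrix_inv B) I))"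

definition geodesic :: "real \<Rightarrow> real \<Rightarrow> complex set" where
  "geodesic p q =
     (if p = 0 then {z. Im z > 0 \<and> Re z = cot q}
      else if q = 0 then {z. Im z > 0 \<and> Re z = cot p}
      else {z. Im z > 0 \<and> cmod (z - complex_of_real ((cot p + cot q) / 2)) = \<bar>cot p - cot q\<bar> / 2})"

definition translation_axis :: "mat2 \<Rightarrow> complex set" where
  "translation_axis M = geodesic (rep_fp M) (attr_fp M)"

end

theory Submission
  imports Defs
begin

text \<open>
  If the translation axes of \<open>A\<close> and \<open>B\<close> meet at \<open>z\<close>, conjugating by a real affine map that
  moves \<open>z\<close> to \<open>i\<close> makes both matrices symmetric and leaves all traces of words unchanged.
  A symmetric \<open>M \<in> SL\<^sub>2(\<real>)\<close> of trace \<open>t > 2\<close> has operator norm \<open>\<lambda>(t)\<close>, the larger root of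
  \<open>x\<^sup>2 - t x + 1\<close>, and every \<open>N \<in> SL\<^sub>2(\<real>)\<close> satisfies \<open>tr N \<le> \<parallel>N\<parallel> + 1 / \<parallel>N\<parallel>\<close>. As the norm is
  submultiplicative, a word \<open>w\<close> of length \<open>n\<close> has \<open>\<parallel>\<phi>(w)\<parallel> \<le> \<lambda>(tr B)\<^sup>n\<close>, hence
  \<open>[w] \<le> \<lambda>(tr B)\<^sup>n + \<lambda>(tr B)\<^sup>-\<^sup>n = [b\<^sup>n]\<close>. The inequality is strict unless \<open>w\<close> is a power of \<open>b\<close>,
  or of \<open>a\<close> when \<open>[a] = [b]\<close>: otherwise \<open>w\<close> contains the letter \<open>a\<close> while \<open>\<lambda>(tr A) < \<lambda>(tr B)\<close>,
  or it contains \<open>ab\<close> or \<open>ba\<close>, and \<open>\<parallel>AB\<parallel> < \<lambda>(t)\<^sup>2\<close> for distinct symmetric \<open>A, B\<close> of common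
  trace \<open>t\<close>. So the maximal words are exactly these letter powers and the optimal words are the
  corresponding letters.
\<close>

lemma mat2_mult_entries:
  fixes M N :: "real^2^2"
  shows "(M ** N)$1$1 = M$1$1 * N$1$1 + M$1$2 * N$2$1"
    and "(M ** N)$1$2 = M$1$1 * N$1$2 + M$1$2 * N$2$2"
    and "(M ** N)$2$1 = M$2$1 * N$1$1 + M$2$2 * N$2$1"
    and "(M ** N)$2$2 = M$2$1 * N$1$2 + M$2$2 * N$2$2"
  by (simp_all add: matrix_matrix_mult_def sum_2)

lemma mat2_mult_vec_entries:
  fixes M :: "real^2^2" and v :: "real^2"
  shows "(M *v v)$1 = M$1$1 * v$1 + M$1$2 * v$2"
    and "(M *v v)$2 = M$2$1 * v$1 + M$2$2 * v$2"
  by (simp_all add: matrix_vector_mult_def sum_2)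

lemma mat2_one_entries:
  shows "(mat 1 :: real^2^2)$1$1 = 1" and "(mat 1 :: real^2^2)$1$2 = 0"
    and "(mat 1 :: real^2^2)$2$1 = 0" and "(mat 1 :: real^2^2)$2$2 = 1"
  by (simp_all add: mat_def)

lemma vec2_eq_iff: "(v :: real^2) = w \<longleftrightarrow> v$1 = w$1 \<and> v$2 = w$2"
  by (auto simp: vec_eq_iff forall_2)

lemma mat2_eq_iff:
  fixes M N :: "real^2^2"
  shows "M = N \<longleftrightarrow> M$1$1 = N$1$1 \<and> M$1$2 = N$1$2 \<and> M$2$1 = N$2$1 \<and> M$2$2 = N$2$2"
  by (auto simp: vec_eq_iff forall_2)

lemma trace_mat2: "trace (M :: real^2^2) = M$1$1 + M$2$2"
  by (simp add: trace_def sum_2)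

lemma symmetric_mat2_iff: "transpose M = M \<longleftrightarrow> (M :: real^2^2)$1$2 = M$2$1"
  by (auto simp: mat2_eq_iff transpose_def)

lemma norm_sq_vec2: "norm (v :: real^2)^2 = v$1^2 + v$2^2"
  unfolding power2_norm_eq_inner by (simp add: inner_vec_def sum_2 power2_eq_square)

lemma norm_sq_mat2: "norm (M :: real^2^2)^2 = M$1$1^2 + M$1$2^2 + M$2$1^2 + M$2$2^2"
  unfolding power2_norm_eq_inner by (simp add: inner_vec_def sum_2 power2_eq_square)

lemma norm_transpose_mat2: "norm (transpose M) = norm (M :: real^2^2)"
proof -
  have "norm (transpose M)^2 = norm M^2"
    by (simp add: norm_sq_mat2 transpose_def)
  then show ?thesis
    by simp
qed

lemma cayley_hamilton_trace_mat2:
  fixes M X :: "real^2^2"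
  shows "trace (M ** (M ** X)) = trace M * trace (M ** X) - det M * trace X"
  by (simp add: trace_mat2 mat2_mult_entries det_2 algebra_simps)

lemma norm_sq_ge_2_SL2:
  fixes M :: "real^2^2"
  assumes "det M = 1"
  shows "2 \<le> norm M^2"
proof -
  have "norm M^2 = (M$1$1 - M$2$2)^2 + (M$1$2 + M$2$1)^2 + 2 * det M"
    unfolding norm_sq_mat2 by (simp add: det_2 power2_eq_square algebra_simps)
  then show ?thesis
    using assms by simp
qed

lemma trace_sq_le_norm_sq_SL2:
  fixes M :: "real^2^2"
  assumes "det M = 1"
  shows "trace M^2 \<le> norm M^2 + 2"
proof -
  have "norm M^2 + 2 * det M - trace M^2 = (M$1$2 - M$2$1)^2"
    unfolding norm_sq_mat2 by (simp add: trace_mat2 det_2 power2_eq_square algebra_simps)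
  then show ?thesis
    using assms zero_le_power2[of "M$1$2 - M$2$1"] by linarith
qed

lemma column_gram_det_mat2:
  fixes M :: "real^2^2"
  shows "(M$1$1^2 + M$2$1^2) * (M$1$2^2 + M$2$2^2) - (M$1$1 * M$1$2 + M$2$1 * M$2$2)^2 = det M^2"
  by (simp add: det_2 power2_eq_square algebra_simps)

lemma add_inverse_strict_mono:
  fixes x y :: real
  assumes "1 \<le> x" and "x < y"
  shows "x + 1/x < y + 1/y"
proof -
  have "1 * y \<le> x * y"
    using assms by (intro mult_right_mono) simp_all
  then have "0 < (y - x) * (x*y - 1) / (x*y)"
    using assms by (intro divide_pos_pos mult_pos_pos) linarith+
  also have "\<dots> = y + 1/y - (x + 1/x)"
    using assms by (simp add: field_simps)
  finally show ?thesis
    by simp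
qed

lemma add_inverse_mono:
  fixes x y :: real
  shows "1 \<le> x \<Longrightarrow> x \<le> y \<Longrightarrow> x + 1/x \<le> y + 1/y"
  using add_inverse_strict_mono[of x y] by (cases "x = y") simp_all

lemma sq_add_inverse:
  fixes x :: real
  shows "x \<noteq> 0 \<Longrightarrow> x^2 + 1/x^2 = (x + 1/x)^2 - 2"
  by (simp add: power2_eq_square field_simps)

definition dom_eig :: "real \<Rightarrow> real" where
  "dom_eig t = (t + sqrt (t^2 - 4)) / 2"

lemma dom_eig_ge_1: "2 \<le> t \<Longrightarrow> 1 \<le> dom_eig t"
proof -
  assume "2 \<le> t"
  then have "4 \<le> t^2"
    using power_mono[of 2 t 2] by simp
  then have "0 \<le> sqrt (t^2 - 4)"
    by simp
  then show ?thesis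
    using \<open>2 \<le> t\<close> unfolding dom_eig_def by argo
qed

lemma dom_eig_gt_1: "2 < t \<Longrightarrow> 1 < dom_eig t"
proof -
  assume "2 < t"
  then have "4 < t^2"
    using power_strict_mono[of 2 t 2] by simp
  then have "0 < sqrt (t^2 - 4)"
    by simp
  then show ?thesis
    using \<open>2 < t\<close> unfolding dom_eig_def by argo
qed

lemma dom_eig_root:
  assumes "2 \<le> t"
  shows "dom_eig t^2 - t * dom_eig t + 1 = 0"
proof -
  have "4 \<le> t^2"
    using power_mono[OF assms, of 2] by simp
  then have "sqrt (t^2 - 4)^2 = t^2 - 4"
    by simp
  then show ?thesis
    by (simp add: dom_eig_def power2_eq_square field_simps)
qed

lemma dom_eig_add_inverse: "2 \<le> t \<Longrightarrow> dom_eig t + 1 / dom_eig t = t"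
  using dom_eig_root[of t] dom_eig_ge_1[of t] by (simp add: field_simps power2_eq_square)

lemma dom_eig_strict_mono:
  assumes "2 \<le> t" and "t < t'"
  shows "dom_eig t < dom_eig t'"
proof -
  have "t^2 \<le> t'^2"
    using assms by (simp add: power_mono)
  then have "sqrt (t^2 - 4) \<le> sqrt (t'^2 - 4)"
    by simp
  then show ?thesis
    using assms unfolding dom_eig_def by argo
qed

lemma dom_eig_mono: "2 \<le> t \<Longrightarrow> t \<le> t' \<Longrightarrow> dom_eig t \<le> dom_eig t'"
  using dom_eig_strict_mono[of t t'] by (cases "t = t'") simp_all

lemma dom_eig_roots_iff:
  assumes "2 \<le> t"
  shows "l^2 - t * l + 1 = 0 \<longleftrightarrow> l = dom_eig t \<or> l = 1 / dom_eig t"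
proof -
  have "dom_eig t \<noteq> 0"
    using dom_eig_ge_1[OF assms] by simp
  then have "(l - dom_eig t) * (l - 1 / dom_eig t) = l^2 - (dom_eig t + 1 / dom_eig t) * l + 1"
    by (simp add: power2_eq_square field_simps)
  then have "l^2 - t * l + 1 = (l - dom_eig t) * (l - 1 / dom_eig t)"
    using assms by (simp add: dom_eig_add_inverse)
  then show ?thesis
    by simp
qed

lemma dom_eig_add_inverse_eq:
  assumes "1 \<le> s"
  shows "dom_eig (s + 1/s) = s"
proof -
  have "(s + 1/s)^2 - 4 = (s - 1/s)^2"
    using assms by (simp add: power2_eq_square field_simps)
  moreover have "1/s \<le> s"
    using assms order_trans[of "1/s" 1 s] by simp
  ultimately have "sqrt ((s + 1/s)^2 - 4) = s - 1/s"
    by simp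
  then show ?thesis
    by (simp add: dom_eig_def)
qed

lemma dom_eig_pow4_add_inverse:
  assumes "2 \<le> t"
  shows "dom_eig t^4 + 1 / dom_eig t^4 = (t^2 - 2)^2 - 2"
proof -
  define s where "s = dom_eig t^2"
  have "dom_eig t \<noteq> 0"
    using dom_eig_ge_1[OF assms] by simp
  then have "s \<noteq> 0" and "s + 1/s = t^2 - 2"
    using sq_add_inverse[of "dom_eig t"] dom_eig_add_inverse[OF assms] by (simp_all add: s_def)
  then have "s^2 + 1/s^2 = (t^2 - 2)^2 - 2"
    using sq_add_inverse[of s] by simp
  moreover have "dom_eig t^4 = s^2"
    by (simp add: s_def flip: power_mult)
  ultimately show ?thesis
    by simp
qed

section \<open>Stretch bounds and traces\<close>

definition sq_stretch_le :: "real^2^2 \<Rightarrow> real \<Rightarrow> bool" where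
  "sq_stretch_le M K \<longleftrightarrow> (\<forall>v. norm (M *v v)^2 \<le> K * norm v^2)"

lemma sq_stretch_le_one: "sq_stretch_le (mat 1) 1"
  by (simp add: sq_stretch_le_def)

lemma sq_stretch_le_mult:
  assumes "sq_stretch_le M K" and "sq_stretch_le N L" and "0 \<le> K"
  shows "sq_stretch_le (M ** N) (K * L)"
  unfolding sq_stretch_le_def
proof
  fix v :: "real^2"
  have "norm ((M ** N) *v v)^2 = norm (M *v (N *v v))^2"
    by (simp add: matrix_vector_mul_assoc)
  also have "\<dots> \<le> K * norm (N *v v)^2"
    using assms(1) by (simp add: sq_stretch_le_def)
  also have "\<dots> \<le> K * (L * norm v^2)"
    using assms(2,3) by (simp add: sq_stretch_le_def mult_left_mono)
  finally show "norm ((M ** N) *v v)^2 \<le> K * L * norm v^2"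
    by (simp add: mult.assoc)
qed

lemma quadratic_form_nonneg_iff:
  fixes \<alpha> \<beta> \<gamma> :: real
  shows "(\<forall>x y. 0 \<le> \<alpha> * x^2 + 2 * \<beta> * x * y + \<gamma> * y^2) \<longleftrightarrow> 0 \<le> \<alpha> \<and> 0 \<le> \<gamma> \<and> \<beta>^2 \<le> \<alpha> * \<gamma>"
proof
  assume Q: "\<forall>x y. 0 \<le> \<alpha> * x^2 + 2 * \<beta> * x * y + \<gamma> * y^2"
  have \<alpha>: "0 \<le> \<alpha>" and \<gamma>: "0 \<le> \<gamma>"
    using Q[rule_format, of 1 0] Q[rule_format, of 0 1] by simp_all
  have "\<beta>^2 \<le> \<alpha> * \<gamma>"
  proof (cases "\<alpha> = 0 \<and> \<gamma> = 0")
    case True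
    then have "0 \<le> - 2 * \<beta>^2"
      using Q[rule_format, of "-\<beta>" 1] by (simp add: power2_eq_square)
    then show ?thesis
      using True by simp
  next
    case False
    have "0 \<le> \<alpha> * (\<alpha> * \<gamma> - \<beta>^2)" "0 \<le> \<gamma> * (\<alpha> * \<gamma> - \<beta>^2)"
      using Q[rule_format, of \<beta> "-\<alpha>"] Q[rule_format, of "-\<gamma>" \<beta>]
      by (simp_all add: power2_eq_square algebra_simps)
    then show ?thesis
      using False \<alpha> \<gamma> by (auto simp: zero_le_mult_iff)
  qed
  then show "0 \<le> \<alpha> \<and> 0 \<le> \<gamma> \<and> \<beta>^2 \<le> \<alpha> * \<gamma>"
    using \<alpha> \<gamma> by simp
next
  assume "0 \<le> \<alpha> \<and> 0 \<le> \<gamma> \<and> \<beta>^2 \<le> \<alpha> * \<gamma>"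
  then have \<alpha>: "0 \<le> \<alpha>" and \<gamma>: "0 \<le> \<gamma>" and disc: "\<beta>^2 \<le> \<alpha> * \<gamma>"
    by simp_all
  show "\<forall>x y. 0 \<le> \<alpha> * x^2 + 2 * \<beta> * x * y + \<gamma> * y^2"
  proof (intro allI)
    fix x y :: real
    show "0 \<le> \<alpha> * x^2 + 2 * \<beta> * x * y + \<gamma> * y^2"
    proof (cases "\<alpha> = 0")
      case True
      then show ?thesis
        using disc \<gamma> by simp
    next
      case False
      have "\<alpha> * (\<alpha> * x^2 + 2 * \<beta> * x * y + \<gamma> * y^2) = (\<alpha> * x + \<beta> * y)^2 + (\<alpha> * \<gamma> - \<beta>^2) * y^2"
        by (simp add: power2_eq_square algebra_simps)
      also have "\<dots> \<ge> 0"
        using disc by simp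
      finally show ?thesis
        using False \<alpha> by (simp add: zero_le_mult_iff)
    qed
  qed
qed

text \<open>On \<open>real^2^2\<close>, \<open>norm\<close> is the Frobenius norm. For \<open>M \<in> SL\<^sub>2\<close> the Gram matrix of the
  columns has determinant \<open>1\<close> and trace \<open>\<parallel>M\<parallel>\<^sup>2\<close>, so its eigenvalues are \<open>s, 1/s\<close> with
  \<open>s + 1/s = \<parallel>M\<parallel>\<^sup>2\<close>, and \<open>s\<close> is the squared operator norm.\<close>
lemma sq_stretch_le_SL2_iff:
  fixes M :: "real^2^2"
  assumes "det M = 1"
  shows "sq_stretch_le M K \<longleftrightarrow>
    M$1$1^2 + M$2$1^2 \<le> K \<and> M$1$2^2 + M$2$2^2 \<le> K \<and> K * norm M^2 \<le> K^2 + 1"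
proof -
  define p where "p = M$1$1^2 + M$2$1^2"
  define r where "r = M$1$2^2 + M$2$2^2"
  define q where "q = M$1$1 * M$1$2 + M$2$1 * M$2$2"
  have gram: "p * r - q^2 = 1"
    using column_gram_det_mat2[of M] assms by (simp add: p_def r_def q_def)
  have norm: "norm M^2 = p + r"
    by (simp add: norm_sq_mat2 p_def r_def)
  have form: "K * norm v^2 - norm (M *v v)^2 = (K - p) * (v$1)^2 + 2 * (- q) * (v$1) * (v$2) + (K - r) * (v$2)^2"
    for v :: "real^2"
    unfolding norm_sq_vec2 by (simp add: mat2_mult_vec_entries p_def q_def r_def power2_eq_square algebra_simps)
  have "sq_stretch_le M K \<longleftrightarrow> (\<forall>x y. 0 \<le> (K - p) * x^2 + 2 * (- q) * x * y + (K - r) * y^2)"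
    unfolding sq_stretch_le_def
  proof safe
    fix x y :: real
    assume "\<forall>v. norm (M *v v)^2 \<le> K * norm v^2"
    then have "0 \<le> K * norm (vector [x, y] :: real^2)^2 - norm (M *v vector [x, y])^2"
      by simp
    then show "0 \<le> (K - p) * x^2 + 2 * (- q) * x * y + (K - r) * y^2"
      unfolding form by simp
  next
    fix v :: "real^2"
    assume "\<forall>x y. 0 \<le> (K - p) * x^2 + 2 * (- q) * x * y + (K - r) * y^2"
    then have "0 \<le> K * norm v^2 - norm (M *v v)^2"
      unfolding form by blast
    then show "norm (M *v v)^2 \<le> K * norm v^2"
      by simp
  qed
  also have "\<dots> \<longleftrightarrow> p \<le> K \<and> r \<le> K \<and> q^2 \<le> (K - p) * (K - r)"
    using quadratic_form_nonneg_iff[of "K - p" "- q" "K - r"] by simp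
  also have "q^2 \<le> (K - p) * (K - r) \<longleftrightarrow> K * (p + r) \<le> K^2 + 1"
    using gram by (simp add: power2_eq_square algebra_simps)
  finally show ?thesis
    by (simp add: norm p_def r_def)
qed

lemma sq_stretch_le_SL2_ge_1:
  fixes M :: "real^2^2"
  assumes "det M = 1" and "sq_stretch_le M K"
  shows "1 \<le> K"
proof -
  have "M$1$1^2 + M$2$1^2 \<le> K" and "M$1$2^2 + M$2$2^2 \<le> K"
    using assms(2) unfolding sq_stretch_le_SL2_iff[OF assms(1)] by simp_all
  moreover have "2 \<le> M$1$1^2 + M$1$2^2 + M$2$1^2 + M$2$2^2"
    using norm_sq_ge_2_SL2[OF assms(1)] by (simp add: norm_sq_mat2)
  ultimately show ?thesis
    by linarith
qed

lemma sq_stretch_le_SL2_iff_norm: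
  fixes M :: "real^2^2"
  assumes "det M = 1" and "1 \<le> K"
  shows "sq_stretch_le M K \<longleftrightarrow> norm M^2 \<le> K + 1/K"
proof -
  define p where "p = M$1$1^2 + M$2$1^2"
  define r where "r = M$1$2^2 + M$2$2^2"
  have norm: "norm M^2 = p + r"
    by (simp add: norm_sq_mat2 p_def r_def)
  have "p * r - (M$1$1 * M$1$2 + M$2$1 * M$2$2)^2 = 1"
    using column_gram_det_mat2[of M] assms(1) by (simp add: p_def r_def)
  then have pr: "1 \<le> p * r"
    using zero_le_power2[of "M$1$1 * M$1$2 + M$2$1 * M$2$2"] by linarith
  then have "p \<noteq> 0" "r \<noteq> 0"
    by auto
  then have p: "0 < p" and r: "0 < r"
    by (simp_all add: p_def r_def order_le_neq_trans)
  have bound: "K * norm M^2 \<le> K^2 + 1 \<longleftrightarrow> norm M^2 \<le> K + 1/K"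
    using assms(2) by (simp add: field_simps power2_eq_square)
  have "s \<le> K" if "norm M^2 \<le> K + 1/K" and "s + 1/s \<le> norm M^2" for s
    using that add_inverse_strict_mono[OF assms(2), of s] by linarith
  moreover have "p + 1/p \<le> norm M^2" "r + 1/r \<le> norm M^2"
    using pr p r by (simp_all add: norm field_simps)
  ultimately have "norm M^2 \<le> K + 1/K \<Longrightarrow> p \<le> K \<and> r \<le> K"
    by blast
  then show ?thesis
    unfolding sq_stretch_le_SL2_iff[OF assms(1)] bound by (auto simp: p_def r_def)
qed

lemma sq_stretch_le_SL2_dom_eig:
  fixes M :: "real^2^2"
  assumes "det M = 1"
  shows "sq_stretch_le M (dom_eig (norm M^2))"
proof -
  have "2 \<le> norm M^2"
    by (rule norm_sq_ge_2_SL2[OF assms])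
  then show ?thesis
    using sq_stretch_le_SL2_iff_norm[OF assms dom_eig_ge_1] dom_eig_add_inverse by simp
qed

lemma trace_le_of_sq_stretch_le:
  fixes M :: "real^2^2"
  assumes "det M = 1" and "sq_stretch_le M K" and "K \<le> L^2" and "1 \<le> L"
  shows "trace M \<le> L + 1/L"
    and "K < L^2 \<Longrightarrow> trace M < L + 1/L"
proof -
  have K: "1 \<le> K"
    by (rule sq_stretch_le_SL2_ge_1[OF assms(1,2)])
  have tr: "trace M^2 \<le> K + 1/K + 2"
    using trace_sq_le_norm_sq_SL2[OF assms(1)] assms(2)
    unfolding sq_stretch_le_SL2_iff_norm[OF assms(1) K] by linarith
  have sq: "(L + 1/L)^2 = L^2 + 1/L^2 + 2"
    using assms(4) by (simp add: power2_eq_square field_simps)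
  have pos: "0 \<le> L + 1/L"
    using assms(4) by simp
  have "K + 1/K \<le> L^2 + 1/L^2"
    using add_inverse_mono[OF K assms(3)] by (simp add: power_one_over)
  then have "trace M^2 \<le> (L + 1/L)^2"
    using tr sq by linarith
  then show "trace M \<le> L + 1/L"
    using pos by (rule power2_le_imp_le)
  assume "K < L^2"
  then have "K + 1/K < L^2 + 1/L^2"
    using add_inverse_strict_mono[OF K] by (simp add: power_one_over)
  then have "trace M^2 < (L + 1/L)^2"
    using tr sq by linarith
  then show "trace M < L + 1/L"
    using pos by (rule power_less_imp_less_base)
qed

section \<open>Symmetric matrices\<close>

lemma norm_sq_symmetric_SL2:
  fixes M :: "real^2^2"
  assumes "transpose M = M" and "det M = 1"
  shows "norm M^2 = trace M^2 - 2"
  using assms unfolding symmetric_mat2_iff norm_sq_mat2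
  by (simp add: trace_mat2 det_2 power2_eq_square algebra_simps)

lemma sq_stretch_le_symmetric_SL2:
  fixes M :: "real^2^2"
  assumes "transpose M = M" and "det M = 1" and "2 \<le> trace M"
  shows "sq_stretch_le M (dom_eig (trace M)^2)"
proof -
  define l where "l = dom_eig (trace M)"
  have l: "1 \<le> l"
    using dom_eig_ge_1[OF assms(3)] by (simp add: l_def)
  have "norm M^2 = (l + 1/l)^2 - 2"
    using norm_sq_symmetric_SL2[OF assms(1,2)] dom_eig_add_inverse[OF assms(3)] by (simp add: l_def)
  also have "\<dots> = l^2 + 1/l^2"
    using l by (simp add: sq_add_inverse)
  finally show ?thesis
    using l sq_stretch_le_SL2_iff_norm[OF assms(2), of "l^2"]
    by (simp add: l_def power_one_over)
qed

text \<open>For symmetric \<open>A, B \<in> SL\<^sub>2\<close> of common trace \<open>t\<close>, Cayley--Hamilton gives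
  \<open>\<parallel>AB\<parallel>\<^sup>2 = tr (A\<^sup>2B\<^sup>2) = t\<^sup>2 tr (AB) - 2t\<^sup>2 + 2\<close>.\<close>
lemma norm_sq_mult_symmetric_SL2:
  fixes A B :: "real^2^2"
  assumes "transpose A = A" and "transpose B = B" and "det A = 1" and "det B = 1"
    and "trace A = trace B"
  shows "norm (A ** B)^2 = trace A^2 * trace (A ** B) - 2 * trace A^2 + 2"
proof -
  have "(a*e + b*f)^2 + (a*f + b*g)^2 + (b*e + d*f)^2 + (b*f + d*g)^2
      = (a + d)^2 * (a*e + 2*b*f + d*g) - 2 * (a + d)^2 + 2"
    if "a*d - b^2 = 1" "e*g - f^2 = 1" "a + d = e + g" for a b d e f g :: real
    using that by algebra
  from this[where a = "A$1$1" and b = "A$1$2" and d = "A$2$2"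
      and e = "B$1$1" and f = "B$1$2" and g = "B$2$2"] show ?thesis
    using assms unfolding symmetric_mat2_iff norm_sq_mat2 trace_mat2 det_2
    by (simp add: mat2_mult_entries power2_eq_square)
qed

lemma trace_mult_symmetric_SL2:
  fixes A B :: "real^2^2"
  assumes "transpose A = A" and "transpose B = B" and "det A = 1" and "det B = 1"
    and "trace A = trace B"
  shows "trace (A ** B) = trace A^2 - 2 - norm (A - B)^2 / 2"
proof -
  have "a*e + 2*b*f + d*g = (a + d)^2 - 2 - ((a - e)^2 + 2*(b - f)^2 + (d - g)^2) / 2"
    if "a*d - b^2 = 1" "e*g - f^2 = 1" "a + d = e + g" for a b d e f g :: real
    using that by algebra
  from this[where a = "A$1$1" and b = "A$1$2" and d = "A$2$2"
      and e = "B$1$1" and f = "B$1$2" and g = "B$2$2"] show ?thesis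
    using assms unfolding symmetric_mat2_iff norm_sq_mat2 trace_mat2 det_2
    by (simp add: mat2_mult_entries power2_eq_square algebra_simps)
qed

lemma sq_stretch_lt_mult_symmetric_SL2:
  fixes A B :: "real^2^2"
  assumes "transpose A = A" and "transpose B = B" and "det A = 1" and "det B = 1"
    and "trace A = t" and "trace B = t" and "2 < t" and "A \<noteq> B"
  obtains K where "K < dom_eig t^4" and "sq_stretch_le (A ** B) K" and "sq_stretch_le (B ** A) K"
proof
  define \<nu> where "\<nu> = norm (A ** B)^2"
  have det: "det (A ** B) = 1" "det (B ** A) = 1"
    using assms(3,4) by (simp_all add: det_mul)
  have "transpose (A ** B) = B ** A"
    using assms(1,2) by (simp add: matrix_transpose_mul)
  then have \<nu>_BA: "norm (B ** A)^2 = \<nu>"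
    by (metis \<nu>_def norm_transpose_mat2)
  show "sq_stretch_le (A ** B) (dom_eig \<nu>)" and "sq_stretch_le (B ** A) (dom_eig \<nu>)"
    using sq_stretch_le_SL2_dom_eig[OF det(1)] sq_stretch_le_SL2_dom_eig[OF det(2)]
    by (simp_all add: \<nu>_BA \<nu>_def)
  have "0 < norm (A - B)^2"
    using assms(8) by simp
  then have "trace (A ** B) < t^2 - 2"
    using trace_mult_symmetric_SL2[OF assms(1-4)] assms(5,6) by simp
  then have "\<nu> < t^2 * (t^2 - 2) - 2 * t^2 + 2"
    using norm_sq_mult_symmetric_SL2[OF assms(1-4)] assms(5-7) by (simp add: \<nu>_def)
  also have "\<dots> = dom_eig t^4 + 1 / dom_eig t^4"
    using dom_eig_pow4_add_inverse[of t] assms(7) by (simp add: power2_eq_square algebra_simps)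
  finally have "dom_eig \<nu> < dom_eig (dom_eig t^4 + 1 / dom_eig t^4)"
    using norm_sq_ge_2_SL2[OF det(1)] by (intro dom_eig_strict_mono) (simp_all add: \<nu>_def)
  also have "\<dots> = dom_eig t^4"
    using dom_eig_ge_1[of t] assms(7) by (simp add: dom_eig_add_inverse_eq)
  finally show "dom_eig \<nu> < dom_eig t^4" .
qed

section \<open>Traces of words\<close>

definition letter_mat :: "real^2^2 \<Rightarrow> real^2^2 \<Rightarrow> letter \<Rightarrow> real^2^2" where
  "letter_mat A B l = (case l of La \<Rightarrow> A | Lb \<Rightarrow> B)"

lemma letter_mat_simps [simp]: "letter_mat A B La = A" "letter_mat A B Lb = B"
  by (simp_all add: letter_mat_def)

lemma phi_Nil [simp]: "phi A B [] = mat 1"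
  by (simp add: phi_def)

lemma phi_Cons [simp]: "phi A B (l # w) = letter_mat A B l ** phi A B w"
  by (simp add: phi_def letter_mat_def)

lemma phi_append: "phi A B (u @ v) = phi A B u ** phi A B v"
  by (induction u) (simp_all add: matrix_mul_assoc)

lemma det_phi: "det A = 1 \<Longrightarrow> det B = 1 \<Longrightarrow> det (phi A B w) = 1"
  by (induction w) (auto simp: det_mul letter_mat_def split: letter.splits)

lemma wtr_single: "wtr A B [La] = trace A" "wtr A B [Lb] = trace B"
  by (simp_all add: wtr_def)

lemma count_list_letters: "count_list w La + count_list w Lb = length w"
proof (induction w)
  case (Cons l w)
  then show ?case
    by (cases l) simp_all
qed simp

lemma sq_stretch_le_phi:
  assumes "sq_stretch_le A KA" and "sq_stretch_le B KB" and "0 \<le> KA" and "0 \<le> KB"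
  shows "sq_stretch_le (phi A B w) (KA ^ count_list w La * KB ^ count_list w Lb)"
proof (induction w)
  case Nil
  then show ?case
    by (simp add: sq_stretch_le_one)
next
  case (Cons l w)
  then show ?case
    using sq_stretch_le_mult[OF assms(1) Cons assms(3)] sq_stretch_le_mult[OF assms(2) Cons assms(4)]
    by (cases l) (simp_all add: ac_simps)
qed

lemma sq_stretch_le_phi_uniform:
  assumes "sq_stretch_le A K" and "sq_stretch_le B K" and "0 \<le> K"
  shows "sq_stretch_le (phi A B w) (K ^ length w)"
  using sq_stretch_le_phi[OF assms(1,2,3,3), of w]
  by (simp add: count_list_letters flip: power_add)

lemma trace_phi_replicate:
  assumes "det (letter_mat A B l) = 1" and "2 \<le> trace (letter_mat A B l)"
  shows "trace (phi A B (replicate n l)) = dom_eig (trace (letter_mat A B l))^n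
    + (1 / dom_eig (trace (letter_mat A B l)))^n"
proof -
  define L where "L = letter_mat A B l"
  define x where "x = dom_eig (trace L)"
  have "x \<noteq> 0" and x: "trace L = x + 1/x"
    using dom_eig_ge_1[of "trace L"] dom_eig_add_inverse[of "trace L"] assms by (simp_all add: L_def x_def)
  have "trace (phi A B (replicate n l)) = x^n + (1/x)^n"
  proof (induction n rule: induct_nat_012)
    case 0
    then show ?case
      by (simp add: trace_mat2 mat2_one_entries)
  next
    case 1
    then show ?case
      by (simp add: x flip: L_def)
  next
    case (ge2 n)
    have "trace (phi A B (replicate (Suc (Suc n)) l))
        = trace L * trace (phi A B (replicate (Suc n) l)) - trace (phi A B (replicate n l))"
      using cayley_hamilton_trace_mat2[of L] assms(1) by (simp add: L_def)
    also have "\<dots> = x^Suc (Suc n) + (1/x)^Suc (Suc n)"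
      using ge2 \<open>x \<noteq> 0\<close> by (simp add: x field_simps)
    finally show ?case .
  qed
  then show ?thesis
    by (simp add: x_def L_def)
qed

lemma adjacent_distinct_split:
  assumes "a \<in> set w" and "b \<in> set w" and "a \<noteq> b"
  shows "\<exists>u x y v. x \<noteq> y \<and> w = u @ x # y # v"
  using assms
proof (induction w)
  case (Cons l w)
  show ?case
  proof (cases w)
    case Nil
    then show ?thesis
      using Cons.prems by simp
  next
    case (Cons m w')
    show ?thesis
    proof (cases "l = m")
      case True
      then have "a \<in> set w" "b \<in> set w"
        using Cons.prems(1,2) \<open>w = m # w'\<close> by auto
      then obtain u x y v where "x \<noteq> y" "w = u @ x # y # v"
        using Cons.IH Cons.prems(3) by blast
      then have "x \<noteq> y \<and> l # w = (l # u) @ x # y # v"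
        by simp
      then show ?thesis
        by blast
    next
      case False
      then have "l \<noteq> m \<and> l # w = [] @ l # m # w'"
        using \<open>w = m # w'\<close> by simp
      then show ?thesis
        by blast
    qed
  qed
qed simp

lemma sq_power_count_letters:
  fixes x :: real
  shows "(x^2)^count_list w La * (x^2)^count_list w Lb = (x^length w)^2"
proof -
  have "(x^2)^count_list w La * (x^2)^count_list w Lb = (x^2)^length w"
    by (simp add: count_list_letters flip: power_add)
  also have "\<dots> = (x^length w)^2"
    by (simp add: mult.commute flip: power_mult)
  finally show ?thesis .
qed

lemma ex_replicate_letter_iff:
  shows "(\<exists>n. w = replicate n Lb) \<longleftrightarrow> La \<notin> set w"
    and "(\<exists>n. w = replicate n La) \<longleftrightarrow> Lb \<notin> set w"
proof -
  have "(\<exists>n. w = replicate n l) \<longleftrightarrow> (\<forall>x\<in>set w. x = l)" for l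
    by (metis in_set_replicate replicate_length_same)
  moreover have "(\<forall>x\<in>set w. x = Lb) \<longleftrightarrow> La \<notin> set w" and "(\<forall>x\<in>set w. x = La) \<longleftrightarrow> Lb \<notin> set w"
    by (metis letter.exhaust letter.distinct(1))+
  ultimately show "(\<exists>n. w = replicate n Lb) \<longleftrightarrow> La \<notin> set w"
    and "(\<exists>n. w = replicate n La) \<longleftrightarrow> Lb \<notin> set w"
    by simp_all
qed

locale symmetric_SL2_pair =
  fixes A B :: "real^2^2"
  assumes symmetric_A: "transpose A = A" and symmetric_B: "transpose B = B"
    and det_A: "det A = 1" and det_B: "det B = 1"
    and trace_A_gt_2: "2 < trace A" and trace_A_le_B: "trace A \<le> trace B"
begin

lemma trace_B_gt_2: "2 < trace B"
  using trace_A_gt_2 trace_A_le_B by simp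

lemma det_letter_mat: "det (letter_mat A B l) = 1"
  using det_A det_B by (cases l) simp_all

lemma dom_eig_B_gt_1: "1 < dom_eig (trace B)"
  using dom_eig_gt_1[OF trace_B_gt_2] .

lemma trace_power_Lb:
  "trace (phi A B (replicate n Lb)) = dom_eig (trace B)^n + 1 / dom_eig (trace B)^n"
  using trace_phi_replicate[of A B Lb n] det_B trace_B_gt_2 by (simp add: power_one_over)

lemma trace_power_La_eq_Lb:
  "trace A = trace B \<Longrightarrow> trace (phi A B (replicate n La)) = trace (phi A B (replicate n Lb))"
  using trace_phi_replicate[of A B La n] trace_phi_replicate[of A B Lb n] det_A det_B trace_B_gt_2
  by simp

lemma sq_stretch_le_word:
  "sq_stretch_le (phi A B w)
     ((dom_eig (trace A)^2)^count_list w La * (dom_eig (trace B)^2)^count_list w Lb)"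
  using sq_stretch_le_phi sq_stretch_le_symmetric_SL2 symmetric_A symmetric_B det_A det_B
    trace_A_gt_2 trace_B_gt_2 by simp

lemma trace_word_le_of_sq_stretch_le:
  assumes "sq_stretch_le (phi A B w) K" and "K \<le> (dom_eig (trace B)^length w)^2"
  shows "trace (phi A B w) \<le> trace (phi A B (replicate (length w) Lb))"
    and "K < (dom_eig (trace B)^length w)^2
      \<Longrightarrow> trace (phi A B w) < trace (phi A B (replicate (length w) Lb))"
  using trace_le_of_sq_stretch_le[OF det_phi[OF det_A det_B] assms] dom_eig_B_gt_1
  by (simp_all add: trace_power_Lb power_one_over)

lemma trace_word_le: "trace (phi A B w) \<le> trace (phi A B (replicate (length w) Lb))"
proof (rule trace_word_le_of_sq_stretch_le(1)[OF sq_stretch_le_word])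
  have "dom_eig (trace A) \<le> dom_eig (trace B)"
    using dom_eig_mono trace_A_gt_2 trace_A_le_B by simp
  then have "(dom_eig (trace A)^2)^count_list w La \<le> (dom_eig (trace B)^2)^count_list w La"
    using dom_eig_ge_1[of "trace A"] trace_A_gt_2 by (intro power_mono) simp_all
  then show "(dom_eig (trace A)^2)^count_list w La * (dom_eig (trace B)^2)^count_list w Lb
      \<le> (dom_eig (trace B)^length w)^2"
    unfolding sq_power_count_letters[symmetric] by (simp add: mult_right_mono)
qed

lemma sq_stretch_lt_if_trace_lt:
  assumes "trace A < trace B" and "La \<in> set w"
  obtains K where "sq_stretch_le (phi A B w) K" and "K < (dom_eig (trace B)^length w)^2"
proof (rule that[OF sq_stretch_le_word])
  have "dom_eig (trace A) < dom_eig (trace B)"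
    using dom_eig_strict_mono trace_A_gt_2 assms(1) by simp
  then have sq: "dom_eig (trace A)^2 < dom_eig (trace B)^2"
    using dom_eig_ge_1[of "trace A"] trace_A_gt_2 by (intro power_strict_mono) simp_all
  have "count_list w La \<noteq> 0"
    using assms(2) by (simp add: count_list_0_iff)
  then have "(dom_eig (trace A)^2)^count_list w La < (dom_eig (trace B)^2)^count_list w La"
    by (intro power_strict_mono[OF sq]) simp_all
  then have "(dom_eig (trace A)^2)^count_list w La * (dom_eig (trace B)^2)^count_list w Lb
      < (dom_eig (trace B)^2)^count_list w La * (dom_eig (trace B)^2)^count_list w Lb"
    using dom_eig_B_gt_1 by (intro mult_strict_right_mono) simp_all
  then show "(dom_eig (trace A)^2)^count_list w La * (dom_eig (trace B)^2)^count_list w Lb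
      < (dom_eig (trace B)^length w)^2"
    by (simp only: sq_power_count_letters)
qed

text \<open>A word containing both letters contains \<open>ab\<close> or \<open>ba\<close>, whose matrix stretches strictly
  less than \<open>B\<^sup>2\<close> does.\<close>
lemma sq_stretch_lt_if_mixed:
  assumes "trace A = trace B" and "A \<noteq> B" and "La \<in> set w" and "Lb \<in> set w"
  obtains K where "sq_stretch_le (phi A B w) K" and "K < (dom_eig (trace B)^length w)^2"
proof -
  define \<kappa> where "\<kappa> = dom_eig (trace B)^2"
  have \<kappa>: "0 < \<kappa>"
    using dom_eig_B_gt_1 by (simp add: \<kappa>_def)
  have A\<kappa>: "sq_stretch_le A \<kappa>" and B\<kappa>: "sq_stretch_le B \<kappa>"
    using sq_stretch_le_symmetric_SL2[OF symmetric_A det_A] sq_stretch_le_symmetric_SL2[OF symmetric_B det_B]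
      trace_A_gt_2 trace_B_gt_2 assms(1) by (simp_all add: \<kappa>_def)
  obtain u x y v where "x \<noteq> y" and w: "w = u @ x # y # v"
    using adjacent_distinct_split[OF assms(3,4)] by blast
  obtain K2 where K2: "K2 < \<kappa>^2" "sq_stretch_le (letter_mat A B x ** letter_mat A B y) K2"
  proof -
    obtain K2 where "K2 < dom_eig (trace B)^4" "sq_stretch_le (A ** B) K2" "sq_stretch_le (B ** A) K2"
      using sq_stretch_lt_mult_symmetric_SL2[OF symmetric_A symmetric_B det_A det_B assms(1) refl
          trace_B_gt_2 assms(2)] .
    moreover from this(2,3) have "sq_stretch_le (letter_mat A B x ** letter_mat A B y) K2"
      using \<open>x \<noteq> y\<close> by (cases x; cases y) simp_all
    ultimately show ?thesis
      by (intro that[of K2]) (simp_all add: \<kappa>_def flip: power_mult)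
  qed
  have "0 \<le> K2"
    using sq_stretch_le_SL2_ge_1[OF _ K2(2)] by (simp add: det_mul det_letter_mat)
  have "phi A B w = phi A B u ** ((letter_mat A B x ** letter_mat A B y) ** phi A B v)"
    by (simp add: w phi_append matrix_mul_assoc)
  then have bound: "sq_stretch_le (phi A B w) (\<kappa>^length u * (K2 * \<kappa>^length v))"
    using \<kappa> \<open>0 \<le> K2\<close>
    by (simp only:) (intro sq_stretch_le_mult sq_stretch_le_phi_uniform A\<kappa> B\<kappa> K2(2); simp)
  have "\<kappa>^length u * (K2 * \<kappa>^length v) < \<kappa>^length u * (\<kappa>^2 * \<kappa>^length v)"
    using \<kappa> K2(1) by simp
  also have "\<dots> = \<kappa>^length w"
    by (simp add: w flip: power_add)
  also have "\<dots> = (dom_eig (trace B)^length w)^2"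
    by (simp add: \<kappa>_def power_mult_distrib flip: power_mult) (simp add: mult.commute)
  finally show ?thesis
    using bound that by blast
qed

lemma trace_word_eq_iff:
  assumes "A \<noteq> B"
  shows "trace (phi A B w) = trace (phi A B (replicate (length w) Lb)) \<longleftrightarrow>
    (\<exists>n. w = replicate n Lb) \<or> (trace A = trace B \<and> (\<exists>n. w = replicate n La))"
proof
  assume eq: "trace (phi A B w) = trace (phi A B (replicate (length w) Lb))"
  show "(\<exists>n. w = replicate n Lb) \<or> (trace A = trace B \<and> (\<exists>n. w = replicate n La))"
  proof (rule ccontr)
    assume "\<not> ?thesis"
    then have "La \<in> set w" and mixed: "trace A = trace B \<Longrightarrow> Lb \<in> set w"
      by (auto simp: ex_replicate_letter_iff)
    obtain K where K: "sq_stretch_le (phi A B w) K" "K < (dom_eig (trace B)^length w)^2"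
    proof (cases "trace A = trace B")
      case True
      then show ?thesis
        using sq_stretch_lt_if_mixed[OF True assms \<open>La \<in> set w\<close> mixed[OF True]] that by blast
    next
      case False
      then have "trace A < trace B"
        using trace_A_le_B by simp
      then show ?thesis
        using sq_stretch_lt_if_trace_lt[OF _ \<open>La \<in> set w\<close>] that by blast
    qed
    then show False
      using trace_word_le_of_sq_stretch_le(2)[OF K(1) less_imp_le[OF K(2)] K(2)] eq by simp
  qed
next
  assume "(\<exists>n. w = replicate n Lb) \<or> (trace A = trace B \<and> (\<exists>n. w = replicate n La))"
  then show "trace (phi A B w) = trace (phi A B (replicate (length w) Lb))"
    by (auto simp: trace_power_La_eq_Lb)
qed

end

section \<open>Boundary fixed points and translation axes\<close>

lemma dir_entries [simp]: "dir \<theta> $ 1 = cos \<theta>" "dir \<theta> $ 2 = sin \<theta>"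
  by (simp_all add: dir_def)

lemma dir_nonzero: "dir \<theta> \<noteq> 0"
proof
  assume "dir \<theta> = 0"
  then have "cos \<theta> = 0" and "sin \<theta> = 0"
    by (simp_all add: vec2_eq_iff)
  then show False
    using sin_cos_squared_add[of \<theta>] by simp
qed

lemma dir_eq_if_parallel:
  assumes "\<theta>1 \<in> P1" and "\<theta>2 \<in> P1" and "cos \<theta>1 * sin \<theta>2 - sin \<theta>1 * cos \<theta>2 = 0"
  shows "\<theta>1 = \<theta>2"
proof -
  have "sin (\<theta>2 - \<theta>1) = 0"
    using assms(3) by (simp add: sin_diff algebra_simps)
  moreover have "- pi < \<theta>2 - \<theta>1" and "\<theta>2 - \<theta>1 < pi"
    using assms(1,2) by (auto simp: P1_def)
  ultimately show ?thesis
    using sin_eq_0_pi by fastforce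
qed

lemma exists_dir_parallel:
  assumes "v \<noteq> (0 :: real^2)"
  obtains \<theta> k where "\<theta> \<in> P1" and "k \<noteq> 0" and "v = k *\<^sub>R dir \<theta>"
proof -
  define z where "z = Complex (v$1) (v$2)"
  define a where "a = Arg2pi z"
  have "z \<noteq> 0"
    using assms by (auto simp: z_def vec2_eq_iff complex_eq_iff)
  then have r: "cmod z \<noteq> 0"
    by simp
  have a: "0 \<le> a" "a < 2 * pi"
    using Arg2pi[of z] by (simp_all add: a_def)
  have v: "v$1 = cmod z * cos a" "v$2 = cmod z * sin a"
    using cos_Arg2pi[of z] sin_Arg2pi[of z] by (simp_all add: a_def z_def)
  show ?thesis
  proof (cases "a < pi")
    case True
    then show ?thesis
      using that[of a "cmod z"] a r v by (simp add: P1_def vec2_eq_iff)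
  next
    case False
    then show ?thesis
      using that[of "a - pi" "- cmod z"] a r v by (simp add: P1_def vec2_eq_iff cos_diff sin_diff)
  qed
qed

lemma SL2_not_scalar:
  fixes M :: "real^2^2"
  assumes "det M = 1" and "2 < trace M"
  shows "\<not> (M$1$2 = 0 \<and> M$2$1 = 0 \<and> M$1$1 = M$2$2)"
proof
  assume "M$1$2 = 0 \<and> M$2$1 = 0 \<and> M$1$1 = M$2$2"
  then have "M$1$1 * M$1$1 = 1" and "1 < M$1$1"
    using assms by (simp_all add: det_2 trace_mat2)
  then show False
    using mult_strict_mono[of 1 "M$1$1" 1 "M$1$1"] by simp
qed

lemma SL2_eigenvalue_root:
  fixes M :: "real^2^2"
  assumes "det M = 1" and "v \<noteq> 0" and "M *v v = l *\<^sub>R v"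
  shows "l^2 - trace M * l + 1 = 0"
proof -
  have e: "M$1$1 * v$1 + M$1$2 * v$2 = l * v$1" "M$2$1 * v$1 + M$2$2 * v$2 = l * v$2"
    using assms(3) by (simp_all add: vec2_eq_iff mat2_mult_vec_entries)
  have "(l^2 - trace M * l + det M) * v$1 = 0" and "(l^2 - trace M * l + det M) * v$2 = 0"
    using e unfolding trace_mat2 det_2 by algebra+
  then show ?thesis
    using assms(1,2) by (auto simp: vec2_eq_iff)
qed

lemma SL2_eigenvector_exists:
  fixes M :: "real^2^2"
  assumes "det M = 1" and "2 < trace M" and "l^2 - trace M * l + 1 = 0"
  obtains v where "v \<noteq> 0" and "M *v v = l *\<^sub>R v"
proof (cases "M$1$2 = 0 \<and> l = M$1$1")
  case False
  show ?thesis
  proof (rule that[of "vector [M$1$2, l - M$1$1]"])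
    show "vector [M$1$2, l - M$1$1] \<noteq> (0 :: real^2)"
      using False by (auto simp: vec2_eq_iff)
    show "M *v vector [M$1$2, l - M$1$1] = l *\<^sub>R vector [M$1$2, l - M$1$1]"
      using assms by (simp add: vec2_eq_iff mat2_mult_vec_entries det_2 trace_mat2 power2_eq_square algebra_simps)
  qed
next
  case True
  then have "M$2$1 \<noteq> 0 \<or> l \<noteq> M$2$2"
    using SL2_not_scalar[OF assms(1,2)] by auto
  show ?thesis
  proof (rule that[of "vector [l - M$2$2, M$2$1]"])
    show "vector [l - M$2$2, M$2$1] \<noteq> (0 :: real^2)"
      using \<open>M$2$1 \<noteq> 0 \<or> l \<noteq> M$2$2\<close> by (auto simp: vec2_eq_iff)
    show "M *v vector [l - M$2$2, M$2$1] = l *\<^sub>R vector [l - M$2$2, M$2$1]"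
      using assms by (simp add: vec2_eq_iff mat2_mult_vec_entries det_2 trace_mat2 power2_eq_square algebra_simps)
  qed
qed

lemma SL2_eigenvectors_parallel:
  fixes M :: "real^2^2"
  assumes "det M = 1" and "2 < trace M" and "M *v v = l *\<^sub>R v" and "M *v w = l *\<^sub>R w"
  shows "v$1 * w$2 - v$2 * w$1 = 0"
proof (rule ccontr)
  assume X: "v$1 * w$2 - v$2 * w$1 \<noteq> 0"
  have "M$1$1 * v$1 + M$1$2 * v$2 = l * v$1" "M$2$1 * v$1 + M$2$2 * v$2 = l * v$2"
    "M$1$1 * w$1 + M$1$2 * w$2 = l * w$1" "M$2$1 * w$1 + M$2$2 * w$2 = l * w$2"
    using assms(3,4) by (simp_all add: vec2_eq_iff mat2_mult_vec_entries)
  then have "(M$1$1 - l) * (v$1 * w$2 - v$2 * w$1) = 0" "M$1$2 * (v$1 * w$2 - v$2 * w$1) = 0"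
    "M$2$1 * (v$1 * w$2 - v$2 * w$1) = 0" "(M$2$2 - l) * (v$1 * w$2 - v$2 * w$1) = 0"
    by algebra+
  then have "M$1$2 = 0 \<and> M$2$1 = 0 \<and> M$1$1 = M$2$2"
    using X by simp
  then show False
    using SL2_not_scalar[OF assms(1,2)] by simp
qed

lemma SL2_eigendir_unique_existence:
  fixes M :: "real^2^2"
  assumes "det M = 1" and "2 < trace M" and "l^2 - trace M * l + 1 = 0"
  shows "\<exists>!\<theta>. \<theta> \<in> P1 \<and> M *v dir \<theta> = l *\<^sub>R dir \<theta>"
proof (rule ex_ex1I)
  obtain v where "v \<noteq> 0" and v: "M *v v = l *\<^sub>R v"
    using SL2_eigenvector_exists[OF assms] .
  then obtain \<theta> k where "\<theta> \<in> P1" "k \<noteq> 0" "v = k *\<^sub>R dir \<theta>"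
    using exists_dir_parallel by metis
  then have "k *\<^sub>R (M *v dir \<theta>) = k *\<^sub>R (l *\<^sub>R dir \<theta>)"
    using v by (simp add: matrix_vector_mult_scaleR scaleR_left_commute)
  then have "M *v dir \<theta> = l *\<^sub>R dir \<theta>"
    using \<open>k \<noteq> 0\<close> scaleR_cancel_left by blast
  then show "\<exists>\<theta>. \<theta> \<in> P1 \<and> M *v dir \<theta> = l *\<^sub>R dir \<theta>"
    using \<open>\<theta> \<in> P1\<close> by blast
next
  fix \<theta>1 \<theta>2
  assume "\<theta>1 \<in> P1 \<and> M *v dir \<theta>1 = l *\<^sub>R dir \<theta>1" and "\<theta>2 \<in> P1 \<and> M *v dir \<theta>2 = l *\<^sub>R dir \<theta>2"
  then show "\<theta>1 = \<theta>2"
    using SL2_eigenvectors_parallel[OF assms(1,2)] dir_eq_if_parallel by fastforce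
qed

lemma SL2_eigenvalue_cases:
  fixes M :: "real^2^2"
  assumes "det M = 1" and "2 < trace M" and "v \<noteq> 0" and "M *v v = l *\<^sub>R v"
  shows "1 < \<bar>l\<bar> \<longleftrightarrow> l = dom_eig (trace M)"
    and "\<bar>l\<bar> < 1 \<longleftrightarrow> l = 1 / dom_eig (trace M)"
proof -
  define \<mu> where "\<mu> = dom_eig (trace M)"
  have "1 < \<mu>"
    using dom_eig_gt_1[OF assms(2)] by (simp add: \<mu>_def)
  then have "0 < 1 / \<mu>" and "1 / \<mu> < 1"
    by simp_all
  moreover have "\<mu> \<noteq> 1 / \<mu>"
    using calculation \<open>1 < \<mu>\<close> by linarith
  moreover have "l = \<mu> \<or> l = 1 / \<mu>"
    using SL2_eigenvalue_root[OF assms(1,3,4)] dom_eig_roots_iff assms(2) by (simp add: \<mu>_def)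
  ultimately show "1 < \<bar>l\<bar> \<longleftrightarrow> l = dom_eig (trace M)" and "\<bar>l\<bar> < 1 \<longleftrightarrow> l = 1 / dom_eig (trace M)"
    using \<open>1 < \<mu>\<close> unfolding \<mu>_def[symmetric] by (auto simp: abs_if)
qed

lemma SL2_eigendir_The:
  fixes M :: "real^2^2"
  assumes "det M = 1" and "2 < trace M" and "l^2 - trace M * l + 1 = 0"
  defines "\<theta> \<equiv> THE \<theta>. \<theta> \<in> P1 \<and> M *v dir \<theta> = l *\<^sub>R dir \<theta>"
  shows "\<theta> \<in> P1 \<and> M *v dir \<theta> = l *\<^sub>R dir \<theta>"
  unfolding \<theta>_def by (rule theI'[OF SL2_eigendir_unique_existence[OF assms(1-3)]])

lemma attr_fp_eigendir:
  fixes M :: "real^2^2"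
  assumes "det M = 1" and "2 < trace M"
  shows "attr_fp M \<in> P1 \<and> M *v dir (attr_fp M) = dom_eig (trace M) *\<^sub>R dir (attr_fp M)"
proof -
  have "(\<exists>l. 1 < \<bar>l\<bar> \<and> M *v dir \<theta> = l *\<^sub>R dir \<theta>) \<longleftrightarrow> M *v dir \<theta> = dom_eig (trace M) *\<^sub>R dir \<theta>"
    for \<theta>
    using SL2_eigenvalue_cases(1)[OF assms dir_nonzero] by metis
  then have "attr_fp M = (THE \<theta>. \<theta> \<in> P1 \<and> M *v dir \<theta> = dom_eig (trace M) *\<^sub>R dir \<theta>)"
    by (simp add: attr_fp_def)
  then show ?thesis
    using SL2_eigendir_The[OF assms] dom_eig_roots_iff assms(2) by simp
qed

lemma rep_fp_eigendir:
  fixes M :: "real^2^2"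
  assumes "det M = 1" and "2 < trace M"
  shows "rep_fp M \<in> P1 \<and> M *v dir (rep_fp M) = (1 / dom_eig (trace M)) *\<^sub>R dir (rep_fp M)"
proof -
  have "(\<exists>l. \<bar>l\<bar> < 1 \<and> M *v dir \<theta> = l *\<^sub>R dir \<theta>) \<longleftrightarrow> M *v dir \<theta> = (1 / dom_eig (trace M)) *\<^sub>R dir \<theta>"
    for \<theta>
    using SL2_eigenvalue_cases(2)[OF assms dir_nonzero] by metis
  then have "rep_fp M = (THE \<theta>. \<theta> \<in> P1 \<and> M *v dir \<theta> = (1 / dom_eig (trace M)) *\<^sub>R dir \<theta>)"
    by (simp add: rep_fp_def)
  then show ?thesis
    using SL2_eigendir_The[OF assms] dom_eig_roots_iff assms(2) by simp
qed

lemma eigendir_cot_root: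
  fixes M :: "real^2^2"
  assumes "\<theta> \<in> P1" and "\<theta> \<noteq> 0" and "M *v dir \<theta> = l *\<^sub>R dir \<theta>"
  shows "M$2$1 * cot \<theta>^2 + (M$2$2 - M$1$1) * cot \<theta> - M$1$2 = 0"
    and "l = M$2$1 * cot \<theta> + M$2$2"
proof -
  have "0 < sin \<theta>"
    using assms(1,2) by (intro sin_gt_zero) (auto simp: P1_def)
  then have C: "cos \<theta> = cot \<theta> * sin \<theta>"
    by (simp add: cot_def)
  have e: "M$1$1 * cos \<theta> + M$1$2 * sin \<theta> = l * cos \<theta>" "M$2$1 * cos \<theta> + M$2$2 * sin \<theta> = l * sin \<theta>"
    using assms(3) by (simp_all add: vec2_eq_iff mat2_mult_vec_entries)
  have "sin \<theta> * (M$1$1 * cot \<theta> + M$1$2 - l * cot \<theta>) = 0"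
    and "sin \<theta> * (M$2$1 * cot \<theta> + M$2$2 - l) = 0"
    using e C by algebra+
  then have "M$1$1 * cot \<theta> + M$1$2 = l * cot \<theta>" and l: "l = M$2$1 * cot \<theta> + M$2$2"
    using \<open>0 < sin \<theta>\<close> by simp_all
  then show "M$2$1 * cot \<theta>^2 + (M$2$2 - M$1$1) * cot \<theta> - M$1$2 = 0"
    by (simp add: power2_eq_square algebra_simps)
  show "l = M$2$1 * cot \<theta> + M$2$2"
    by (fact l)
qed

text \<open>The right-hand side vanishes exactly on the circle with diameter \<open>[u, v]\<close>, which carries the
  geodesic joining the roots \<open>u, v\<close>.\<close>
lemma circle_through_roots:
  fixes b c e u v x y :: real
  assumes "c * u^2 + e * u - b = 0" and "c * v^2 + e * v - b = 0" and "u \<noteq> v"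
  shows "c * (x^2 + y^2) + e * x - b = c * ((x - (u + v) / 2)^2 + y^2 - ((u - v) / 2)^2)"
proof -
  have "(u - v) * (c * (u + v) + e) = 0"
    using assms(1,2) by algebra
  then have e: "e = - c * (u + v)"
    using assms(3) by simp
  then have b: "b = - c * u * v"
    using assms(1) by algebra
  have circle: "(x - (u + v) / 2)^2 + y^2 - ((u - v) / 2)^2 = x^2 + y^2 - (u + v) * x + u * v"
    by (simp add: power2_eq_square field_simps)
  show ?thesis
    unfolding circle e b by (simp add: algebra_simps)
qed

lemma vertical_axis_equation:
  fixes M :: "real^2^2"
  assumes "M *v dir 0 = l *\<^sub>R dir 0"
    and "\<theta> \<in> P1" and "\<theta> \<noteq> 0" and "M *v dir \<theta> = l' *\<^sub>R dir \<theta>" and "Re z = cot \<theta>"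
  shows "M$2$1 * (Re z^2 + Im z^2) + (M$2$2 - M$1$1) * Re z - M$1$2 = 0"
proof -
  have "M$2$1 = 0"
    using assms(1) by (simp add: vec2_eq_iff mat2_mult_vec_entries)
  then show ?thesis
    using eigendir_cot_root(1)[OF assms(2-4)] assms(5) by simp
qed

lemma circle_axis_equation:
  fixes M :: "real^2^2"
  assumes "p \<in> P1" and "p \<noteq> 0" and "M *v dir p = l *\<^sub>R dir p"
    and "q \<in> P1" and "q \<noteq> 0" and "M *v dir q = l' *\<^sub>R dir q" and "l \<noteq> l'"
    and "cmod (z - complex_of_real ((cot p + cot q) / 2)) = \<bar>cot p - cot q\<bar> / 2"
  shows "M$2$1 * (Re z^2 + Im z^2) + (M$2$2 - M$1$1) * Re z - M$1$2 = 0"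
proof -
  define u v where "u = cot p" and "v = cot q"
  have "u \<noteq> v"
    using eigendir_cot_root(2)[OF assms(1-3)] eigendir_cot_root(2)[OF assms(4-6)] assms(7)
    by (auto simp: u_def v_def)
  define r where "r = cmod (z - complex_of_real ((u + v) / 2))"
  have "r^2 = (\<bar>u - v\<bar> / 2)^2"
    using assms(8) by (simp only: r_def u_def v_def)
  also have "\<dots> = ((u - v) / 2)^2"
    by (simp add: power_divide)
  finally have circle: "(Re z - (u + v) / 2)^2 + Im z^2 - ((u - v) / 2)^2 = 0"
    by (simp add: r_def cmod_power2)
  have "M$2$1 * u^2 + (M$2$2 - M$1$1) * u - M$1$2 = 0"
    and "M$2$1 * v^2 + (M$2$2 - M$1$1) * v - M$1$2 = 0"
    using eigendir_cot_root(1)[OF assms(1-3)] eigendir_cot_root(1)[OF assms(4-6)]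
    by (simp_all add: u_def v_def)
  then show ?thesis
    using circle_through_roots[OF _ _ \<open>u \<noteq> v\<close>, of "M$2$1" "M$2$2 - M$1$1" "M$1$2" "Re z" "Im z"]
      circle by simp
qed

lemma translation_axis_equation:
  fixes M :: "real^2^2"
  assumes "det M = 1" and "2 < trace M" and "z \<in> translation_axis M"
  shows "0 < Im z" and "M$2$1 * (Re z^2 + Im z^2) + (M$2$2 - M$1$1) * Re z - M$1$2 = 0"
proof -
  define p q \<rho> where "p = rep_fp M" and "q = attr_fp M" and "\<rho> = dom_eig (trace M)"
  have "1 < \<rho>"
    using dom_eig_gt_1[OF assms(2)] by (simp add: \<rho>_def)
  then have "1 / \<rho> < 1"
    by simp
  then have \<rho>: "1 / \<rho> \<noteq> \<rho>"
    using \<open>1 < \<rho>\<close> by linarith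
  have p: "p \<in> P1" "M *v dir p = (1 / \<rho>) *\<^sub>R dir p"
    using rep_fp_eigendir[OF assms(1,2)] by (simp_all add: p_def \<rho>_def)
  have q: "q \<in> P1" "M *v dir q = \<rho> *\<^sub>R dir q"
    using attr_fp_eigendir[OF assms(1,2)] by (simp_all add: q_def \<rho>_def)
  have "p \<noteq> q"
  proof
    assume "p = q"
    then have "(1 / \<rho>) *\<^sub>R dir p = \<rho> *\<^sub>R dir p"
      using p(2) q(2) by metis
    then show False
      using dir_nonzero[of p] \<rho> by simp
  qed
  have z: "z \<in> geodesic p q"
    using assms(3) by (simp add: translation_axis_def p_def q_def)
  then show "0 < Im z"
    by (auto simp: geodesic_def split: if_splits)
  consider "p = 0" | "q = 0" | "p \<noteq> 0" and "q \<noteq> 0"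
    by blast
  then show "M$2$1 * (Re z^2 + Im z^2) + (M$2$2 - M$1$1) * Re z - M$1$2 = 0"
  proof cases
    case 1
    then have "q \<noteq> 0" and "Re z = cot q"
      using \<open>p \<noteq> q\<close> z by (auto simp: geodesic_def)
    then show ?thesis
      using vertical_axis_equation[OF p(2)[unfolded \<open>p = 0\<close>] q(1) _ q(2)] by blast
  next
    case 2
    then have "p \<noteq> 0" and "Re z = cot p"
      using \<open>p \<noteq> q\<close> z by (auto simp: geodesic_def)
    then show ?thesis
      using vertical_axis_equation[OF q(2)[unfolded \<open>q = 0\<close>] p(1) _ p(2)] by blast
  next
    case 3
    then show ?thesis
      using circle_axis_equation[OF p(1) _ p(2) q(1) _ q(2) \<rho>] z by (simp add: geodesic_def)
  qed
qed

section \<open>Moving the crossing point of the axes to \<open>i\<close>\<close>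

lemma phi_conj:
  assumes "P ** Q = mat 1" and "Q ** P = mat 1"
  shows "phi (P ** A ** Q) (P ** B ** Q) w = P ** phi A B w ** Q"
proof (induction w)
  case Nil
  then show ?case
    using assms(1) by simp
next
  case (Cons l w)
  have "letter_mat (P ** A ** Q) (P ** B ** Q) l = P ** letter_mat A B l ** Q"
    by (cases l) simp_all
  then have "phi (P ** A ** Q) (P ** B ** Q) (l # w) = P ** letter_mat A B l ** (Q ** P) ** phi A B w ** Q"
    using Cons by (simp add: matrix_mul_assoc)
  then show ?case
    using assms(2) by (simp add: matrix_mul_assoc)
qed

lemma trace_conj:
  fixes P Q X :: "real^2^2"
  assumes "Q ** P = mat 1"
  shows "trace (P ** X ** Q) = trace X"
proof -
  have "trace (P ** X ** Q) = trace (Q ** (P ** X))"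
    by (rule trace_mul_sym)
  also have "\<dots> = trace X"
    using assms by (simp add: matrix_mul_assoc)
  finally show ?thesis .
qed

lemma det_conj:
  fixes P Q X :: "real^2^2"
  assumes "P ** Q = mat 1"
  shows "det (P ** X ** Q) = det X"
proof -
  have "det P * det Q = 1"
    using arg_cong[OF assms, of det] by (simp add: det_mul)
  then show ?thesis
    by (simp add: det_mul algebra_simps)
qed

lemma conj_commute_iff:
  fixes P Q A B :: "real^2^2"
  assumes "P ** Q = mat 1" and "Q ** P = mat 1"
  shows "(P ** A ** Q) ** (P ** B ** Q) = (P ** B ** Q) ** (P ** A ** Q) \<longleftrightarrow> A ** B = B ** A"
proof -
  have QP: "Q ** (P ** Z) = Z" for Z :: "real^2^2"
    using assms(2) by (simp add: matrix_mul_assoc)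
  have conj_mult: "(P ** X ** Q) ** (P ** Y ** Q) = P ** (X ** Y) ** Q" for X Y :: "real^2^2"
    by (simp add: QP flip: matrix_mul_assoc)
  have conj_cancel: "Q ** (P ** X ** Q) ** P = X" for X :: "real^2^2"
    by (simp add: QP assms(2) flip: matrix_mul_assoc)
  show ?thesis
    unfolding conj_mult using conj_cancel by metis
qed

text \<open>The matrix of the Moebius map \<open>w \<mapsto> (w - Re z) / Im z\<close>, which moves \<open>z\<close> to \<open>i\<close>,
  and its inverse.\<close>
definition chart :: "complex \<Rightarrow> real^2^2" where
  "chart z = (\<chi> i j. if i = 1 then (if j = 1 then 1 else - Re z) else (if j = 1 then 0 else Im z))"

definition chart_inv :: "complex \<Rightarrow> real^2^2" where
  "chart_inv z = (\<chi> i j. if i = 1 then (if j = 1 then 1 else Re z / Im z) else (if j = 1 then 0 else 1 / Im z))"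

lemma chart_entries:
  shows "chart z $1$1 = 1" "chart z $1$2 = - Re z" "chart z $2$1 = 0" "chart z $2$2 = Im z"
    and "chart_inv z $1$1 = 1" "chart_inv z $1$2 = Re z / Im z" "chart_inv z $2$1 = 0"
    "chart_inv z $2$2 = 1 / Im z"
  by (simp_all add: chart_def chart_inv_def)

lemma chart_inverse:
  assumes "Im z \<noteq> 0"
  shows "chart z ** chart_inv z = mat 1" and "chart_inv z ** chart z = mat 1"
  using assms by (simp_all add: mat2_eq_iff mat2_mult_entries chart_entries mat2_one_entries field_simps)

lemma symmetric_chart_conj:
  fixes M :: "real^2^2"
  assumes "Im z \<noteq> 0" and "M$2$1 * (Re z^2 + Im z^2) + (M$2$2 - M$1$1) * Re z - M$1$2 = 0"
  shows "transpose (chart z ** M ** chart_inv z) = chart z ** M ** chart_inv z"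
proof -
  have "(chart z ** M ** chart_inv z)$1$2
      = (M$1$1 * Re z + M$1$2 - Re z * Re z * M$2$1 - Re z * M$2$2) / Im z"
    using assms(1) by (simp add: mat2_mult_entries chart_entries field_simps)
  also have "M$1$1 * Re z + M$1$2 - Re z * Re z * M$2$1 - Re z * M$2$2 = Im z * (Im z * M$2$1)"
    using assms(2) by algebra
  also have "Im z * (Im z * M$2$1) / Im z = (chart z ** M ** chart_inv z)$2$1"
    using assms(1) by (simp add: mat2_mult_entries chart_entries)
  finally show ?thesis
    unfolding symmetric_mat2_iff .
qed

lemma symmetric_conjugate_if_axes_meet:
  fixes A B :: "real^2^2"
  assumes "SL2 A" and "SL2 B" and "hyperbolic A" and "hyperbolic B" and "trace A \<le> trace B"
    and "translation_axis A \<inter> translation_axis B \<noteq> {}"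
  obtains P Q where "P ** Q = mat 1" and "Q ** P = mat 1"
    and "symmetric_SL2_pair (P ** A ** Q) (P ** B ** Q)"
proof -
  obtain z where zA: "z \<in> translation_axis A" and zB: "z \<in> translation_axis B"
    using assms(6) by blast
  have A: "det A = 1" "2 < trace A" and B: "det B = 1" "2 < trace B"
    using assms(1-4) by (simp_all add: SL2_def hyperbolic_def)
  have "Im z \<noteq> 0"
    using translation_axis_equation(1)[OF A zA] by simp
  then have "chart z ** chart_inv z = mat 1" and "chart_inv z ** chart z = mat 1"
    by (simp_all add: chart_inverse)
  moreover have "symmetric_SL2_pair (chart z ** A ** chart_inv z) (chart z ** B ** chart_inv z)"
    using \<open>Im z \<noteq> 0\<close> assms(5) translation_axis_equation(2)[OF A zA] translation_axis_equation(2)[OF B zB]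
    by unfold_locales (simp_all add: symmetric_chart_conj det_conj trace_conj chart_inverse A B)
  ultimately show ?thesis
    using that by blast
qed

section \<open>Maximal and optimal words\<close>

lemma length_wpow: "length (wpow w n) = n * length w"
  by (induction n) (simp_all add: wpow_def)

lemma wpow_replicate: "wpow (replicate m x) n = replicate (n * m) x"
  by (induction n) (simp_all add: wpow_def replicate_add)

lemma lyndon_replicate_iff: "lyndon (replicate n x) \<longleftrightarrow> n = 1"
proof
  assume "lyndon (replicate n x)"
  then have "replicate n x \<noteq> []"
    and "\<And>k. 0 < k \<Longrightarrow> k < n \<Longrightarrow> (replicate n x, rotate k (replicate n x)) \<in> lexord letter_less"
    by (simp_all add: lyndon_def)
  moreover have "(replicate n x, replicate n x) \<notin> lexord letter_less"
    by (rule lexord_irreflexive) (simp add: letter_less_def)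
  moreover have "rotate 1 (replicate n x) = replicate n x"
    by simp
  ultimately show "n = 1"
    by (metis One_nat_def Suc_lessI less_one neq0_conv replicate_empty)
qed (simp add: lyndon_def)

lemma maximal_word_iff_letter_power:
  assumes le: "\<And>w. wtr A B w \<le> wtr A B (replicate (length w) Lb)"
    and eq: "\<And>w. wtr A B w = wtr A B (replicate (length w) Lb) \<longleftrightarrow> (\<exists>x\<in>X. \<exists>n. w = replicate n x)"
  shows "maximal_word A B w \<longleftrightarrow> (\<exists>x\<in>X. \<exists>n\<ge>1. w = replicate n x)"
proof
  assume "maximal_word A B w"
  then have "w \<noteq> []" and "wle A B [Lb] w"
    by (simp_all add: maximal_word_def)
  then have "wtr A B (replicate (length w) Lb) \<le> wtr A B w"
    by (simp add: wle_def wpow_replicate[of 1, simplified] wpow_def)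
  then obtain x n where "x \<in> X" and "w = replicate n x"
    using le[of w] eq[of w] by auto
  then show "\<exists>x\<in>X. \<exists>n\<ge>1. w = replicate n x"
    using \<open>w \<noteq> []\<close> by (auto simp: Suc_le_eq)
next
  assume "\<exists>x\<in>X. \<exists>n\<ge>1. w = replicate n x"
  then obtain x n where "x \<in> X" and "1 \<le> n" and w: "w = replicate n x"
    by blast
  have "wle A B u w" if "u \<noteq> []" for u
  proof -
    have "wtr A B (wpow u n) \<le> wtr A B (replicate (length u * n) Lb)"
      using le[of "wpow u n"] by (simp add: length_wpow mult.commute)
    also have "\<dots> = wtr A B (replicate (length u * n) x)"
      using eq[of "replicate (length u * n) x"] \<open>x \<in> X\<close> by auto
    finally show ?thesis
      by (simp add: wle_def w wpow_replicate)
  qed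
  then show "maximal_word A B w"
    using \<open>1 \<le> n\<close> by (simp add: maximal_word_def w)
qed

lemma complete_optimal_iff_letter_powers:
  assumes max: "\<And>w. maximal_word A B w \<longleftrightarrow> (\<exists>x\<in>X. \<exists>n\<ge>1. w = replicate n x)"
  shows "complete_optimal A B S \<longleftrightarrow> S = (\<lambda>x. [x]) ` X"
proof -
  have max_lyndon: "maximal_word A B v \<and> lyndon v \<longleftrightarrow> v \<in> (\<lambda>x. [x]) ` X" for v
  proof
    assume "maximal_word A B v \<and> lyndon v"
    then obtain x n where "x \<in> X" and "v = replicate n x" and "lyndon v"
      by (auto simp: max)
    then show "v \<in> (\<lambda>x. [x]) ` X"
      by (simp add: lyndon_replicate_iff)
  next
    assume "v \<in> (\<lambda>x. [x]) ` X"
    then obtain x where "x \<in> X" and "v = replicate 1 x"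
      by auto
    then show "maximal_word A B v \<and> lyndon v"
      using max[of v] lyndon_replicate_iff[of 1 x] by blast
  qed
  have single_eq: "[x] = wpow (rotate k [y]) n \<longleftrightarrow> n = 1 \<and> x = y" for x y :: letter and k n
    by (auto simp: wpow_replicate[of 1, simplified] Cons_replicate_eq)
  show ?thesis
  proof
    assume co: "complete_optimal A B S"
    then have "S \<subseteq> (\<lambda>x. [x]) ` X"
      by (auto simp: complete_optimal_def max_lyndon)
    moreover have "[x] \<in> S" if "x \<in> X" for x
    proof -
      have "maximal_word A B [x]"
        using max[of "[x]"] that by fastforce
      then obtain v k n where "v \<in> S" and "n \<ge> 1" and "[x] = wpow (rotate k v) n"
        using co by (auto simp: complete_optimal_def)
      moreover obtain y where "v = [y]"
        using \<open>v \<in> S\<close> \<open>S \<subseteq> (\<lambda>x. [x]) ` X\<close> by blast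
      ultimately show ?thesis
        using single_eq by simp
    qed
    ultimately show "S = (\<lambda>x. [x]) ` X"
      by blast
  next
    assume S: "S = (\<lambda>x. [x]) ` X"
    have "\<exists>v\<in>S. \<exists>k n. 1 \<le> n \<and> w = wpow (rotate k v) n" if "maximal_word A B w" for w
      using that by (auto simp: S max wpow_replicate[of 1, simplified] intro!: exI[of _ 0])
    then show "complete_optimal A B S"
      using max_lyndon by (auto simp: complete_optimal_def S)
  qed
qed

theorem theorem3p4:
  fixes A B :: "real^2^2"
  assumes "SL2 A" and "SL2 B"
    and "A ** B \<noteq> B ** A"
    and "coherently_oriented A B"
    and "hyperbolic A" and "hyperbolic B"
    and "translation_axis A \<inter> translation_axis B \<noteq> {}"
    and "wtr A B [La] \<le> wtr A B [Lb]"
  shows "complete_optimal A B (if wtr A B [La] = wtr A B [Lb] then {[La], [Lb]} else {[Lb]})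
    \<and> (\<forall>S. complete_optimal A B S \<longrightarrow>
          S = (if wtr A B [La] = wtr A B [Lb] then {[La], [Lb]} else {[Lb]}))"
proof -
  have "trace A \<le> trace B"
    using assms(8) by (simp add: wtr_single)
  then obtain P Q where PQ: "P ** Q = mat 1" "Q ** P = mat 1"
    and symmetric: "symmetric_SL2_pair (P ** A ** Q) (P ** B ** Q)"
    using symmetric_conjugate_if_axes_meet assms(1,2,5-7) by blast
  interpret symmetric_SL2_pair "P ** A ** Q" "P ** B ** Q"
    by (fact symmetric)
  have wtr: "wtr A B w = trace (phi (P ** A ** Q) (P ** B ** Q) w)" for w
    by (simp add: wtr_def phi_conj[OF PQ] trace_conj[OF PQ(2)])
  have "P ** A ** Q \<noteq> P ** B ** Q"
    using assms(3) conj_commute_iff[OF PQ, of A B] by auto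
  define X where "X = (if wtr A B [La] = wtr A B [Lb] then {La, Lb} else {Lb})"
  have "maximal_word A B w \<longleftrightarrow> (\<exists>x\<in>X. \<exists>n\<ge>1. w = replicate n x)" for w
  proof (rule maximal_word_iff_letter_power)
    show "wtr A B w \<le> wtr A B (replicate (length w) Lb)" for w
      unfolding wtr by (rule trace_word_le)
    show "wtr A B w = wtr A B (replicate (length w) Lb) \<longleftrightarrow> (\<exists>x\<in>X. \<exists>n. w = replicate n x)" for w
      unfolding wtr trace_word_eq_iff[OF \<open>P ** A ** Q \<noteq> P ** B ** Q\<close>]
      by (auto simp: X_def wtr_single trace_conj[OF PQ(2)])
  qed
  then have "complete_optimal A B S \<longleftrightarrow> S = (\<lambda>x. [x]) ` X" for S
    by (rule complete_optimal_iff_letter_powers)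
  then show ?thesis
    by (simp add: X_def)
qed

end
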